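(* Let $a$ and $b$ be relatively prime integers with $1<a<b$, let $(u,v)$ be the definitely least solution of $ax+by=1$, let $S=\langle a,b\rangle$ and $h=\min I(S)$. Let $L(S)$ be the $|v|\times|u|$ matrix with $(i,j)$-entry $L(S)(i,j)=h+(i-1)b+(j-1)a$. Then for all $1\le i\le |v|$ and $1\le j\le |u|$, $L(S)(i,j)=F(S)-(|u|-j)a-(|v|-i)b$.
   Context: $\langle a,b\rangle=\{\lambda_1a+\lambda_2b:\lambda_1,\lambda_2\in\mathbb{N}\}$. $F(S)$ is the Frobenius number of $S$, the largest integer not in $S$. $I(S)$ is the set of isolated gaps of $S$ ($x\in\mathbb{N}\setminus S$ with $x-1,x+1\in S$). The definitely least solution $(u,v)$ of $ax+by=1$ is the unique integer solution with $|u|,|v|$ minimal; equivalently the one with $|u|\le b/2$, $|v|\le a/2$. *)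

theory Defs
  imports Main
begin

definition gen2 :: "int \<Rightarrow> int \<Rightarrow> int set" where
  "gen2 a b = {int l1 * a + int l2 * b | l1 l2. True}"

definition frobenius :: "int set \<Rightarrow> int" where
  "frobenius S = Max {x. 0 \<le> x \<and> x \<notin> S}"

definition isolated_gaps :: "int set \<Rightarrow> int set" where
  "isolated_gaps S = {x. 0 \<le> x \<and> x \<notin> S \<and> x - 1 \<in> S \<and> x + 1 \<in> S}"

definition def_least_sol :: "int \<Rightarrow> int \<Rightarrow> int \<Rightarrow> int \<Rightarrow> bool" where
  "def_least_sol a b u v \<longleftrightarrow> a * u + b * v = 1 \<and> 2 * \<bar>u\<bar> \<le> b \<and> 2 * \<bar>v\<bar> \<le> a"

definition Lmat :: "int \<Rightarrow> int \<Rightarrow> int \<Rightarrow> int \<Rightarrow> int" where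
  "Lmat a b i j = Min (isolated_gaps (gen2 a b)) + (i - 1) * b + (j - 1) * a"

end

theory Submission
  imports Defs
begin

text \<open>The nonnegative gaps of \<open>\<langle>a,b\<rangle>\<close> are exactly the numbers \<open>ab - ma - nb\<close> with
  \<open>m, n \<ge> 1\<close>. Hence \<open>F(S) = ab - a - b\<close>. Put \<open>p = |u|\<close>, \<open>q = |v|\<close>; then \<open>\<epsilon> = qb - pa = \<plusminus>1\<close>,
  and shifting a gap \<open>ab - ma - nb\<close> by \<open>\<plusminus>\<epsilon>\<close> gives \<open>ab - (m \<plusminus> p)a - (n \<mp> q)b\<close>. So a gap with
  \<open>m > p\<close> or \<open>n > q\<close> has a gap as neighbour, i.e. every isolated gap has \<open>m \<le> p\<close>, \<open>n \<le> q\<close>;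
  conversely \<open>h = ab - pa - qb\<close> has the neighbours \<open>(b - 2p)a\<close> and \<open>(a - 2q)b\<close>, which lie in
  \<open>S\<close> because \<open>(u,v)\<close> is definitely least. Thus \<open>min I(S) = F(S) - (p - 1)a - (q - 1)b\<close>.\<close>

lemma gen2_memI:
  fixes a b k l :: int
  assumes "0 \<le> k" "0 \<le> l"
  shows "k * a + l * b \<in> gen2 a b"
  unfolding gen2_def using assms by (intro CollectI exI[of _ "nat k"] exI[of _ "nat l"]) simp

lemma ab_minus_notin_gen2:
  fixes a b m n :: int
  assumes "coprime a b" "0 < a" "0 < b" "1 \<le> m" "1 \<le> n"
  shows "a * b - m * a - n * b \<notin> gen2 a b"
proof
  assume "a * b - m * a - n * b \<in> gen2 a b"
  then obtain k l :: nat where "a * b - m * a - n * b = int k * a + int l * b"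
    unfolding gen2_def by blast
  then have sum: "(int k + m) * a + (int l + n) * b = a * b"
    by (simp add: algebra_simps)
  then have "a dvd (int l + n) * b"
    by (metis dvd_triv_left dvd_triv_right dvd_diff add_diff_cancel_left')
  then have "a dvd int l + n"
    using assms(1) by (simp add: coprime_dvd_mult_left_iff)
  then have "a * b \<le> (int l + n) * b"
    using assms by (intro mult_right_mono zdvd_imp_le) auto
  moreover have "b dvd (int k + m) * a"
    using sum by (metis dvd_triv_left dvd_triv_right dvd_diff add_diff_cancel_right')
  then have "b dvd int k + m"
    using assms(1) by (simp add: coprime_dvd_mult_left_iff coprime_commute)
  then have "b * a \<le> (int k + m) * a"
    using assms by (intro mult_right_mono zdvd_imp_le) auto
  ultimately have "2 * (a * b) \<le> a * b"
    using sum by (simp add: algebra_simps)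
  then show False
    using mult_pos_pos[OF assms(2,3)] by linarith
qed

lemma notin_gen2_obtains_ab_minus:
  fixes a b x :: int
  assumes "coprime a b" "0 < b" "0 \<le> x" "x \<notin> gen2 a b"
  obtains m n where "1 \<le> m" "1 \<le> n" "x = a * b - m * a - n * b"
proof -
  obtain u v where uv: "u * a + v * b = 1"
    using bezout_int[of a b] assms(1) by auto
  define k where "k = (x * u) mod b"
  have k: "0 \<le> k" "k < b"
    using assms(2) unfolding k_def by auto
  have k_eq: "k = x * u - (x * u) div b * b"
    unfolding k_def by (simp add: minus_div_mult_eq_mod)
  have "x - k * a = x * (u * a + v * b) - k * a"
    using uv by simp
  also have "\<dots> = (x * v + (x * u) div b * a) * b"
    unfolding k_eq by (simp add: algebra_simps)
  finally obtain l where l: "x = k * a + l * b"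
    by (metis add.commute diff_add_cancel)
  have "l < 0"
    using gen2_memI[OF k(1), of l a b] l assms(4) by fastforce
  show thesis
    using that[of "b - k" "- l"] k l \<open>l < 0\<close> by (simp add: algebra_simps)
qed

lemma gap_le_ab_minus:
  fixes a b x :: int
  assumes "coprime a b" "0 < a" "0 < b" "0 \<le> x" "x \<notin> gen2 a b"
  shows "x \<le> a * b - a - b"
proof -
  obtain m n where "1 \<le> m" "1 \<le> n" "x = a * b - m * a - n * b"
    using notin_gen2_obtains_ab_minus assms(1,3-5) .
  moreover have "a \<le> m * a" "b \<le> n * b"
    using calculation assms(2,3) by simp_all
  ultimately show ?thesis
    by simp
qed

lemma finite_gaps_gen2:
  fixes a b :: int
  assumes "coprime a b" "0 < a" "0 < b"
  shows "finite {x. 0 \<le> x \<and> x \<notin> gen2 a b}"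
  by (rule finite_subset[of _ "{0..a * b - a - b}"]) (auto dest: gap_le_ab_minus[OF assms])

lemma frobenius_gen2:
  fixes a b :: int
  assumes "coprime a b" "1 < a" "1 < b"
  shows "frobenius (gen2 a b) = a * b - a - b"
  unfolding frobenius_def
proof (rule Max_eqI)
  have "1 * 1 \<le> (a - 1) * (b - 1)"
    using assms by (intro mult_mono) auto
  then show "a * b - a - b \<in> {x. 0 \<le> x \<and> x \<notin> gen2 a b}"
    using ab_minus_notin_gen2[OF assms(1), of 1 1] assms by (simp add: algebra_simps)
qed (use finite_gaps_gen2 gap_le_ab_minus assms in auto)

lemma bezout_abs_diff:
  fixes a b u v :: int
  assumes "a * u + b * v = 1" "1 < a" "1 < b"
  shows "\<bar>\<bar>v\<bar> * b - \<bar>u\<bar> * a\<bar> = 1" "u \<noteq> 0" "v \<noteq> 0"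
proof -
  show "u \<noteq> 0" "v \<noteq> 0"
    using assms pos_zmult_eq_1_iff[of a u] pos_zmult_eq_1_iff[of b v] by auto
  moreover have "\<not> (0 < u \<and> 0 < v)"
    using assms by (smt (verit) mult_left_mono mult_pos_pos)
  moreover have "\<not> (u < 0 \<and> v < 0)"
    using assms mult_pos_neg[of a u] mult_pos_neg[of b v] by auto
  ultimately show "\<bar>\<bar>v\<bar> * b - \<bar>u\<bar> * a\<bar> = 1"
    using assms(1) by (cases "0 < u") (auto simp: abs_if algebra_simps)
qed

lemma isolated_gaps_iff_unit_shift:
  fixes e x :: int
  assumes "\<bar>e\<bar> = 1"
  shows "x \<in> isolated_gaps S \<longleftrightarrow> 0 \<le> x \<and> x \<notin> S \<and> x + e \<in> S \<and> x - e \<in> S"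
proof -
  have "e = 1 \<or> e = - 1"
    using assms by linarith
  then show ?thesis
    unfolding isolated_gaps_def by auto
qed

lemma ab_minus_in_isolated_gaps_gen2:
  fixes a b p q :: int
  assumes "coprime a b" "0 < a" "0 < b" "\<bar>q * b - p * a\<bar> = 1"
    and "1 \<le> p" "1 \<le> q" "2 * p \<le> b" "2 * q \<le> a"
  shows "a * b - p * a - q * b \<in> isolated_gaps (gen2 a b)"
proof -
  define h where "h = a * b - p * a - q * b"
  have "2 * p * a + 2 * q * b \<le> b * a + a * b"
    using assms(2,3,7,8) by (intro add_mono mult_right_mono) auto
  then have "0 \<le> h"
    unfolding h_def by (simp add: algebra_simps)
  moreover have "h \<notin> gen2 a b"
    using ab_minus_notin_gen2[OF assms(1-3,5,6)] unfolding h_def .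
  moreover have "h + (q * b - p * a) = (b - 2 * p) * a + 0 * b"
    and "h - (q * b - p * a) = 0 * a + (a - 2 * q) * b"
    unfolding h_def by (simp_all add: algebra_simps)
  then have "h + (q * b - p * a) \<in> gen2 a b" "h - (q * b - p * a) \<in> gen2 a b"
    using assms(7,8) by (simp_all only:) (intro gen2_memI; simp)+
  ultimately show ?thesis
    unfolding h_def[symmetric] isolated_gaps_iff_unit_shift[OF assms(4)] by blast
qed

lemma isolated_gap_gen2_ge_ab_minus:
  fixes a b p q x :: int
  assumes "coprime a b" "0 < a" "0 < b" "\<bar>q * b - p * a\<bar> = 1" "0 \<le> p" "0 \<le> q"
    and "x \<in> isolated_gaps (gen2 a b)"
  shows "a * b - p * a - q * b \<le> x"
proof -
  have x: "0 \<le> x" "x \<notin> gen2 a b"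
    "x + (q * b - p * a) \<in> gen2 a b" "x - (q * b - p * a) \<in> gen2 a b"
    using assms(7) isolated_gaps_iff_unit_shift[OF assms(4)] by auto
  obtain m n where m: "1 \<le> m" and n: "1 \<le> n" and x_eq: "x = a * b - m * a - n * b"
    using notin_gen2_obtains_ab_minus[OF assms(1,3) x(1,2)] .
  have "x + (q * b - p * a) = a * b - (m + p) * a - (n - q) * b"
    and "x - (q * b - p * a) = a * b - (m - p) * a - (n + q) * b"
    unfolding x_eq by (simp_all add: algebra_simps)
  then have "\<not> 1 \<le> n - q" "\<not> 1 \<le> m - p"
    using x(3,4) ab_minus_notin_gen2[OF assms(1-3), of "m + p" "n - q"]
      ab_minus_notin_gen2[OF assms(1-3), of "m - p" "n + q"] m n assms(5,6) by auto
  then have "m * a \<le> p * a" "n * b \<le> q * b"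
    using assms(2,3) by simp_all
  then show ?thesis
    unfolding x_eq by simp
qed

lemma min_isolated_gaps_gen2:
  fixes a b u v :: int
  assumes "coprime a b" "1 < a" "1 < b" "def_least_sol a b u v"
  shows "Min (isolated_gaps (gen2 a b)) = a * b - \<bar>u\<bar> * a - \<bar>v\<bar> * b"
proof (rule Min_eqI)
  have "0 < a" "0 < b"
    using assms(2,3) by simp_all
  note pos = assms(1) this
  have uv: "a * u + b * v = 1" and "2 * \<bar>u\<bar> \<le> b" "2 * \<bar>v\<bar> \<le> a"
    using assms(4) unfolding def_least_sol_def by auto
  moreover have "\<bar>\<bar>v\<bar> * b - \<bar>u\<bar> * a\<bar> = 1" "1 \<le> \<bar>u\<bar>" "1 \<le> \<bar>v\<bar>"
    using bezout_abs_diff[OF uv assms(2,3)] by auto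
  ultimately show "a * b - \<bar>u\<bar> * a - \<bar>v\<bar> * b \<in> isolated_gaps (gen2 a b)"
    and "\<And>x. x \<in> isolated_gaps (gen2 a b) \<Longrightarrow> a * b - \<bar>u\<bar> * a - \<bar>v\<bar> * b \<le> x"
    using ab_minus_in_isolated_gaps_gen2[OF pos] isolated_gap_gen2_ge_ab_minus[OF pos] by auto
  show "finite (isolated_gaps (gen2 a b))"
    by (rule finite_subset[OF _ finite_gaps_gen2[OF pos]]) (auto simp: isolated_gaps_def)
qed

theorem corollary4p12:
  fixes a b u v :: int
  assumes "coprime a b" and "1 < a" and "a < b"
    and "def_least_sol a b u v"
  shows "\<forall>i j. 1 \<le> i \<and> i \<le> \<bar>v\<bar> \<and> 1 \<le> j \<and> j \<le> \<bar>u\<bar> \<longrightarrow>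
           Lmat a b i j = frobenius (gen2 a b) - (\<bar>u\<bar> - j) * a - (\<bar>v\<bar> - i) * b"
proof -
  have "1 < b"
    using assms(2,3) by simp
  then show ?thesis
    unfolding Lmat_def min_isolated_gaps_gen2[OF assms(1,2) \<open>1 < b\<close> assms(4)]
      frobenius_gen2[OF assms(1,2) \<open>1 < b\<close>]
    by (simp add: algebra_simps)
qed

end
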